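(* Fix constants $B>0$, $1\le\Gamma\le 3$, $0<\kappa\le 1$, and fixed Riemann data $\varrho_l>0$, $\varrho_r>0$, $\upsilon_l,\upsilon_r\ge 0$ with $\upsilon_r\le \upsilon_l-\frac{B}{\varrho_l^{\kappa}}$. For parameters $a>0$, $A>0$ (with $a<1/\max(\varrho_l,\varrho_r)$), let $p(\varrho)=A\left(\frac{\varrho}{1-a\varrho}\right)^{\Gamma}-\frac{B}{\varrho^{\kappa}}$, $p_l=p(\varrho_l)$, and let $\varrho_*=\varrho_*(a,A)\in(\varrho_l,1/a)$ be the intermediate density determined by $\upsilon_r=-p(\varrho_* )+\upsilon_l+p_l$. Then $\lim_{a,A\to 0}\varrho_*=+\infty$.
   Context: This concerns the Aw–Rascle type system $\varrho_t+(\varrho\upsilon)_x=0$, $(\varrho(\upsilon+p))_t+(\varrho\upsilon(\upsilon+p))_x=0$ with the pressure $p$ above, and Riemann initial data $(\varrho,\upsilon)(x,0)=(\varrho_l,\upsilon_l)$ for $x<0$, $(\varrho_r,\upsilon_r)$ for $x>0$. When $\upsilon_r<\upsilon_l$, the Riemann solution consists of a 1-shock $S$ from $(\varrho_l,\upsilon_l)$ to an intermediate state $(\varrho_*,\upsilon_* )$ with $\varrho_*>\varrho_l$ and $\upsilon_*+p(\varrho_* )=\upsilon_l+p_l$, followed by a contact discontinuity $J$ from $(\varrho_*,\upsilon_* )$ to $(\varrho_r,\upsilon_r)$ with $\upsilon_*=\upsilon_r$. The limit $a,A\to0$ is taken with $B,\Gamma,\kappa$ and the Riemann data fixed. *)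

theory Defs
  imports "HOL-Analysis.Analysis"
begin

definition AR_pressure :: "real \<Rightarrow> real \<Rightarrow> real \<Rightarrow> real \<Rightarrow> real \<Rightarrow> real \<Rightarrow> real" where
  "AR_pressure a A B \<Gamma> \<kappa> \<rho> = A * (\<rho> / (1 - a * \<rho>)) powr \<Gamma> - B / \<rho> powr \<kappa>"

definition rho_star :: "real \<Rightarrow> real \<Rightarrow> real \<Rightarrow> real \<Rightarrow> real \<Rightarrow> real \<Rightarrow> real \<Rightarrow> real \<Rightarrow> real" where
  "rho_star a A B \<Gamma> \<kappa> \<rho>l \<upsilon>l \<upsilon>r =
     (THE r. \<rho>l < r \<and> r < 1 / a \<and>
        \<upsilon>r = - AR_pressure a A B \<Gamma> \<kappa> r + \<upsilon>l + AR_pressure a A B \<Gamma> \<kappa> \<rho>l)"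

end

theory Submission
  imports Defs
begin

(*
  The pressure p is strictly increasing on (0, 1/a) and unbounded near 1/a, so the intermediate
  density r is well defined. The gap condition on the data gives
  p(r) = \<upsilon>\<^sub>l - \<upsilon>\<^sub>r + p(\<rho>\<^sub>l) \<ge> A (\<rho>\<^sub>l / (1 - a \<rho>\<^sub>l))\<^sup>\<Gamma> > 0,
  i.e. the stiff term A (r / (1 - a r))\<^sup>\<Gamma> exceeds B / r\<^sup>\<kappa>.
  If r \<le> M and 2 a M \<le> 1, the stiff term is at most A (2M)\<^sup>\<Gamma>, which drops below
  B / M\<^sup>\<kappa> \<le> B / r\<^sup>\<kappa> once A is small enough.
*)

lemma divide_one_minus_mult_strict_mono:
  fixes a x y :: real
  assumes "0 \<le> a" "0 \<le> x" "x < y" "a * y < 1"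
  shows "x / (1 - a * x) < y / (1 - a * y)"
proof -
  have "a * x < 1"
    using assms mult_left_mono[of x y a] by linarith
  moreover have "x * (1 - a * y) < y * (1 - a * x)"
    using assms by (simp add: algebra_simps)
  ultimately show ?thesis
    using assms by (simp add: divide_simps)
qed

lemma divide_one_minus_mult_inverse:
  fixes a T :: real
  assumes "0 \<le> a" "0 \<le> T"
  shows "a * (T / (1 + a * T)) < 1" and "T / (1 + a * T) / (1 - a * (T / (1 + a * T))) = T"
proof -
  have "0 < 1 + a * T"
    using assms by (simp add: add_pos_nonneg)
  then show "a * (T / (1 + a * T)) < 1" and "T / (1 + a * T) / (1 - a * (T / (1 + a * T))) = T"
    by (simp_all add: field_simps)
qed

lemma AR_pressure_strict_mono:
  fixes a A B \<Gamma> \<kappa> x y :: real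
  assumes "0 \<le> a" "0 < A" "0 \<le> B" "0 < \<Gamma>" "0 \<le> \<kappa>" "0 < x" "x < y" "a * y < 1"
  shows "AR_pressure a A B \<Gamma> \<kappa> x < AR_pressure a A B \<Gamma> \<kappa> y"
proof -
  have "a * x < 1"
    using assms mult_left_mono[of x y a] by linarith
  then have "0 < x / (1 - a * x)" and "x / (1 - a * x) < y / (1 - a * y)"
    using divide_one_minus_mult_strict_mono[of a x y] assms by auto
  then have "A * (x / (1 - a * x)) powr \<Gamma> < A * (y / (1 - a * y)) powr \<Gamma>"
    using assms by (simp add: powr_less_mono2)
  moreover have "B / y powr \<kappa> \<le> B / x powr \<kappa>"
    using assms by (intro divide_left_mono powr_mono2) auto
  ultimately show ?thesis
    unfolding AR_pressure_def by linarith
qed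

lemma isCont_AR_pressure:
  fixes a A B \<Gamma> \<kappa> x :: real
  assumes "0 < x" "a * x < 1"
  shows "isCont (AR_pressure a A B \<Gamma> \<kappa>) x"
proof -
  have "0 < x / (1 - a * x)"
    using assms by simp
  then show ?thesis
    unfolding AR_pressure_def using assms by (intro continuous_intros) auto
qed

lemma AR_pressure_attains:
  fixes a A B \<Gamma> \<kappa> x c :: real
  assumes "0 \<le> a" "0 < A" "0 \<le> B" "0 < \<Gamma>" "0 \<le> \<kappa>" "0 < x" "a * x < 1"
    and "AR_pressure a A B \<Gamma> \<kappa> x \<le> c"
  obtains r where "x \<le> r" "a * r < 1" "AR_pressure a A B \<Gamma> \<kappa> r = c"
proof -
  define X where "X = max 1 ((c + B / x powr \<kappa>) / A)"
  define T where "T = max (x / (1 - a * x)) (X powr (1 / \<Gamma>))"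
  \<comment> \<open>y is the preimage of T under x \<mapsto> x / (1 - a x), so the stiff term at y is
    A * T powr \<Gamma> \<ge> c + B / x powr \<kappa>.\<close>
  define y where "y = T / (1 + a * T)"
  have "0 < x / (1 - a * x)"
    using assms by simp
  then have T_pos: "0 < T"
    unfolding T_def by linarith
  then have ay: "a * y < 1" and y_ratio: "y / (1 - a * y) = T"
    unfolding y_def using divide_one_minus_mult_inverse assms by auto
  have "x \<le> y"
  proof (rule ccontr)
    assume "\<not> x \<le> y"
    moreover have "0 \<le> y"
      unfolding y_def using T_pos assms by simp
    ultimately have "T < x / (1 - a * x)"
      using divide_one_minus_mult_strict_mono[of a y x] assms y_ratio by simp
    then show False
      unfolding T_def by simp
  qed
  have "X = (X powr (1 / \<Gamma>)) powr \<Gamma>"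
    using assms by (simp add: X_def powr_powr)
  also have "\<dots> \<le> T powr \<Gamma>"
    unfolding T_def using assms by (intro powr_mono2) auto
  finally have "c + B / x powr \<kappa> \<le> A * T powr \<Gamma>"
    unfolding X_def using assms by (simp add: pos_divide_le_eq mult.commute)
  moreover have "B / y powr \<kappa> \<le> B / x powr \<kappa>"
    using assms \<open>x \<le> y\<close> by (intro divide_left_mono powr_mono2) auto
  ultimately have "c \<le> AR_pressure a A B \<Gamma> \<kappa> y"
    unfolding AR_pressure_def y_ratio by linarith
  moreover have "isCont (AR_pressure a A B \<Gamma> \<kappa>) t" if "x \<le> t" "t \<le> y" for t
    using that assms ay mult_left_mono[of t y a] by (intro isCont_AR_pressure) auto
  ultimately obtain r where "x \<le> r" "r \<le> y" "AR_pressure a A B \<Gamma> \<kappa> r = c"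
    using IVT[of "AR_pressure a A B \<Gamma> \<kappa>" x c y] assms \<open>x \<le> y\<close> by blast
  moreover have "a * r < 1"
    using ay \<open>r \<le> y\<close> assms mult_left_mono[of r y a] by linarith
  ultimately show ?thesis
    using that by blast
qed

lemma rho_star_solves:
  fixes a A B \<Gamma> \<kappa> \<rho>l \<upsilon>l \<upsilon>r :: real
  assumes "0 < a" "0 < A" "0 \<le> B" "0 < \<Gamma>" "0 \<le> \<kappa>" "0 < \<rho>l" "\<rho>l < 1 / a" "\<upsilon>r < \<upsilon>l"
  defines "p \<equiv> AR_pressure a A B \<Gamma> \<kappa>" and "\<rho> \<equiv> rho_star a A B \<Gamma> \<kappa> \<rho>l \<upsilon>l \<upsilon>r"
  shows "\<rho>l < \<rho>" and "\<rho> < 1 / a" and "p \<rho> = \<upsilon>l - \<upsilon>r + p \<rho>l"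
proof -
  have below_one: "a * r < 1 \<longleftrightarrow> r < 1 / a" for r
    using assms by (simp add: field_simps)
  let ?solves = "\<lambda>r. \<rho>l < r \<and> r < 1 / a \<and> \<upsilon>r = - p r + \<upsilon>l + p \<rho>l"
  obtain r where r: "\<rho>l \<le> r" "r < 1 / a" "p r = \<upsilon>l - \<upsilon>r + p \<rho>l"
    using AR_pressure_attains[of a A B \<Gamma> \<kappa> \<rho>l "\<upsilon>l - \<upsilon>r + p \<rho>l"] assms below_one
    unfolding p_def by auto
  moreover have "r \<noteq> \<rho>l"
    using r assms by auto
  ultimately have "?solves r"
    by auto
  moreover have "s = r" if "?solves s" for s
  proof (rule linorder_cases[of s r])
    assume "s < r"
    then show ?thesis
      using that r AR_pressure_strict_mono[of a A B \<Gamma> \<kappa> s r] assms below_one unfolding p_def by auto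
  next
    assume "r < s"
    then show ?thesis
      using that r AR_pressure_strict_mono[of a A B \<Gamma> \<kappa> r s] assms below_one unfolding p_def by auto
  qed
  ultimately have "\<rho> = r"
    unfolding \<rho>_def rho_star_def p_def by (rule the_equality)
  with \<open>?solves r\<close> show "\<rho>l < \<rho>" and "\<rho> < 1 / a" and "p \<rho> = \<upsilon>l - \<upsilon>r + p \<rho>l"
    by auto
qed

lemma AR_pressure_neg_below:
  fixes a A B \<Gamma> \<kappa> r M :: real
  assumes "0 \<le> a" "0 \<le> A" "0 < \<Gamma>" "0 \<le> \<kappa>" "0 < r" "r \<le> M" "2 * a * M \<le> 1"
    and "A * (2 * M) powr \<Gamma> < B / M powr \<kappa>"
  shows "AR_pressure a A B \<Gamma> \<kappa> r < 0"
proof -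
  have "a * r \<le> a * M"
    using assms by (simp add: mult_left_mono)
  moreover have "2 * a * M * r \<le> 1 * r"
    using assms by (intro mult_right_mono) auto
  moreover have "2 * M * (1 - a * r) = 2 * M - 2 * a * M * r"
    by (simp add: algebra_simps)
  ultimately have "1 / 2 \<le> 1 - a * r" and "r \<le> 2 * M * (1 - a * r)"
    using assms by linarith+
  then have "r / (1 - a * r) \<le> 2 * M" and "0 \<le> r / (1 - a * r)"
    using assms by (simp_all add: pos_divide_le_eq)
  then have "A * (r / (1 - a * r)) powr \<Gamma> \<le> A * (2 * M) powr \<Gamma>"
    using assms by (simp add: mult_left_mono powr_mono2)
  moreover have "0 \<le> A * (2 * M) powr \<Gamma>"
    using assms by simp
  then have "0 < B / M powr \<kappa>"
    using assms by linarith
  then have "0 < B"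
    using powr_ge_zero[of M \<kappa>] by (auto simp: zero_less_divide_iff)
  then have "B / M powr \<kappa> \<le> B / r powr \<kappa>"
    using assms by (intro divide_left_mono powr_mono2) auto
  ultimately show ?thesis
    unfolding AR_pressure_def using assms by linarith
qed

lemma rho_star_exceeds:
  fixes a A B \<Gamma> \<kappa> \<rho>l \<upsilon>l \<upsilon>r M :: real
  assumes "0 < a" "0 < A" "0 < B" "0 < \<Gamma>" "0 \<le> \<kappa>" "0 < \<rho>l" "a * \<rho>l < 1"
    and "\<upsilon>r \<le> \<upsilon>l - B / \<rho>l powr \<kappa>"
    and "0 < M" "2 * a * M \<le> 1" "A * (2 * M) powr \<Gamma> < B / M powr \<kappa>"
  shows "M < rho_star a A B \<Gamma> \<kappa> \<rho>l \<upsilon>l \<upsilon>r"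
proof -
  let ?\<rho> = "rho_star a A B \<Gamma> \<kappa> \<rho>l \<upsilon>l \<upsilon>r"
  have "\<rho>l < 1 / a"
    using assms by (simp add: field_simps)
  moreover have "0 < B / \<rho>l powr \<kappa>"
    using assms by simp
  then have "\<upsilon>r < \<upsilon>l"
    using assms by linarith
  ultimately have "\<rho>l < ?\<rho>"
    and \<rho>_solves: "AR_pressure a A B \<Gamma> \<kappa> ?\<rho> = \<upsilon>l - \<upsilon>r + AR_pressure a A B \<Gamma> \<kappa> \<rho>l"
    using rho_star_solves assms by auto
  have "0 < A * (\<rho>l / (1 - a * \<rho>l)) powr \<Gamma>"
    using assms by (intro mult_pos_pos) auto
  then have "0 < AR_pressure a A B \<Gamma> \<kappa> ?\<rho>"
    using \<rho>_solves assms(8) unfolding AR_pressure_def by linarith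
  then show ?thesis
    using AR_pressure_neg_below[of a A \<Gamma> \<kappa> ?\<rho> M B] \<open>\<rho>l < ?\<rho>\<close> assms by force
qed

lemma eventually_at_within_mem_fst_snd_less:
  fixes z :: "'a::linorder_topology \<times> 'b::linorder_topology"
  assumes "fst z < \<delta>" "snd z < \<epsilon>"
  shows "\<forall>\<^sub>F x in at z within S. x \<in> S \<and> fst x < \<delta> \<and> snd x < \<epsilon>"
proof -
  have ident: "((\<lambda>x. x) \<longlongrightarrow> z) (at z within S)"
    by (rule tendsto_ident_at)
  have "\<forall>\<^sub>F x in at z within S. fst x < \<delta>" and "\<forall>\<^sub>F x in at z within S. snd x < \<epsilon>"
    using order_tendstoD(2)[OF tendsto_fst[OF ident] assms(1)]
      order_tendstoD(2)[OF tendsto_snd[OF ident] assms(2)]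
    by simp_all
  moreover have "\<forall>\<^sub>F x in at z within S. x \<in> S"
    using eventually_at_topological by blast
  ultimately show ?thesis
    by (auto intro: eventually_conj)
qed

theorem lemma3p1:
  fixes B \<Gamma> \<kappa> \<rho>l \<rho>r \<upsilon>l \<upsilon>r :: real
  assumes "B > 0" and "1 \<le> \<Gamma>" and "\<Gamma> \<le> 3" and "0 < \<kappa>" and "\<kappa> \<le> 1"
    and "\<rho>l > 0" and "\<rho>r > 0" and "\<upsilon>l \<ge> 0" and "\<upsilon>r \<ge> 0"
    and "\<upsilon>r \<le> \<upsilon>l - B / \<rho>l powr \<kappa>"
  shows "filterlim (\<lambda>(a, A). rho_star a A B \<Gamma> \<kappa> \<rho>l \<upsilon>l \<upsilon>r) at_top
           (at (0, 0) within ({0<..<1 / max \<rho>l \<rho>r} \<times> {0<..}))"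
  unfolding filterlim_at_top
proof
  fix M :: real
  define M' where "M' = max M 1"
  then have "0 < M'"
    by simp
  then have "\<forall>\<^sub>F x in at (0, 0) within {0<..<1 / max \<rho>l \<rho>r} \<times> {0<..}.
      x \<in> {0<..<1 / max \<rho>l \<rho>r} \<times> {0<..} \<and> fst x < 1 / (2 * M')
      \<and> snd x < B / (M' powr \<kappa> * (2 * M') powr \<Gamma>)"
    using assms by (intro eventually_at_within_mem_fst_snd_less) auto
  then show "\<forall>\<^sub>F x in at (0, 0) within {0<..<1 / max \<rho>l \<rho>r} \<times> {0<..}.
      M \<le> (case x of (a, A) \<Rightarrow> rho_star a A B \<Gamma> \<kappa> \<rho>l \<upsilon>l \<upsilon>r)"
  proof (rule eventually_mono, clarsimp)
    fix a A :: real
    assume "0 < a" "a < 1 / max \<rho>l \<rho>r" "0 < A" "a < 1 / (2 * M')"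
      "A < B / (M' powr \<kappa> * (2 * M') powr \<Gamma>)"
    then have "a * max \<rho>l \<rho>r < 1" "2 * a * M' \<le> 1" "A * (2 * M') powr \<Gamma> < B / M' powr \<kappa>"
      using \<open>0 < M'\<close> assms by (auto simp: field_simps)
    moreover have "a * \<rho>l \<le> a * max \<rho>l \<rho>r"
      using \<open>0 < a\<close> by (simp add: mult_left_mono)
    ultimately have "a * \<rho>l < 1" "2 * a * M' \<le> 1" "A * (2 * M') powr \<Gamma> < B / M' powr \<kappa>"
      by linarith+
    then have "M' < rho_star a A B \<Gamma> \<kappa> \<rho>l \<upsilon>l \<upsilon>r"
      using rho_star_exceeds[of a A B \<Gamma> \<kappa> \<rho>l \<upsilon>r \<upsilon>l M'] \<open>0 < a\<close> \<open>0 < A\<close> \<open>0 < M'\<close> assms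
      by simp
    then show "M \<le> rho_star a A B \<Gamma> \<kappa> \<rho>l \<upsilon>l \<upsilon>r"
      unfolding M'_def by simp
  qed
qed

end
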